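(* Let $m,n$ be relatively prime positive integers and $\pi$ an $(m,n)$-Dyck path. Then \[ \frac{(m-1)(n-1)}{2} \;=\; h_+(\pi)+\sum_{p\in i(\pi)} k(p). \]
   Context: An $(m,n)$-Dyck path is a lattice path from $(0,0)$ to $(m,n)$ with steps $(1,0)$ (horizontal) and $(0,1)$ (vertical) staying weakly above the diagonal $y=\frac nm x$. "The line through a point $p$" means the line through $p$ parallel to the diagonal. For a lattice point $p$, $k(p)$ is the number of vertical steps of $\pi$ not containing $p$ that the line through $p$ intersects. $i(\pi)$ is the set of lattice points lying strictly between $\pi$ and the diagonal. $h_+(\pi)$ is the number of pairs $(s_1,s_2)$ with $s_1$ a horizontal step, $s_2$ a vertical step of $\pi$, $s_1$ to the left of $s_2$, such that some line parallel to the diagonal intersects both $s_1$ and $s_2$. *)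

theory Defs
  imports Complex_Main
begin

text \<open>A lattice path is a list of steps: True = vertical step (0,1), False = horizontal step (1,0).
  The path starts at (0,0); vertex j is the lattice point reached after the first j steps,
  and step j (for j < length w) goes from vertex j to vertex (Suc j).\<close>

definition vertex :: "bool list \<Rightarrow> nat \<Rightarrow> int \<times> int" where
  "vertex w j = (int (length (filter Not (take j w))), int (length (filter id (take j w))))"

definition dyck_path :: "nat \<Rightarrow> nat \<Rightarrow> bool list \<Rightarrow> bool" where
  "dyck_path m n w \<longleftrightarrow>
     length (filter Not w) = m \<and> length (filter id w) = n \<and>
     (\<forall>j \<le> length w. int n * fst (vertex w j) \<le> int m * snd (vertex w j))"

definition vsteps :: "bool list \<Rightarrow> nat set" where
  "vsteps w = {j. j < length w \<and> w ! j}"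

definition hsteps :: "bool list \<Rightarrow> nat set" where
  "hsteps w = {j. j < length w \<and> \<not> w ! j}"

definition rpt :: "int \<times> int \<Rightarrow> real \<times> real" where
  "rpt p = (real_of_int (fst p), real_of_int (snd p))"

definition step_seg :: "bool list \<Rightarrow> nat \<Rightarrow> (real \<times> real) set" where
  "step_seg w j =
     (let a = real_of_int (fst (vertex w j)); b = real_of_int (snd (vertex w j)) in
      if w ! j then {(a, y) | y. b \<le> y \<and> y \<le> b + 1}
      else {(x, b) | x. a \<le> x \<and> x \<le> a + 1})"

definition diag_line :: "nat \<Rightarrow> nat \<Rightarrow> real \<times> real \<Rightarrow> (real \<times> real) set" where
  "diag_line m n q = {r. real m * (snd r - snd q) = real n * (fst r - fst q)}"

definition kval :: "nat \<Rightarrow> nat \<Rightarrow> bool list \<Rightarrow> int \<times> int \<Rightarrow> nat" where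
  "kval m n w p = card {j \<in> vsteps w. rpt p \<notin> step_seg w j \<and>
                                    diag_line m n (rpt p) \<inter> step_seg w j \<noteq> {}}"

text \<open>i(pi): lattice points strictly between the path and the diagonal, i.e. strictly above
  the diagonal and strictly below the horizontal step of the path ending at the same abscissa.\<close>
definition interior_pts :: "nat \<Rightarrow> nat \<Rightarrow> bool list \<Rightarrow> (int \<times> int) set" where
  "interior_pts m n w = {p. int n * fst p < int m * snd p \<and>
      (\<exists>j \<in> hsteps w. fst (vertex w (Suc j)) = fst p \<and> snd p < snd (vertex w j))}"

definition h_plus :: "nat \<Rightarrow> nat \<Rightarrow> bool list \<Rightarrow> nat" where
  "h_plus m n w = card {(j1, j2). j1 \<in> hsteps w \<and> j2 \<in> vsteps w \<and>
      fst (vertex w j1) + 1 \<le> fst (vertex w j2) \<and>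
      (\<exists>q. diag_line m n q \<inter> step_seg w j1 \<noteq> {} \<and> diag_line m n q \<inter> step_seg w j2 \<noteq> {})}"

end

theory Submission
  imports Defs
begin

text \<open>
  Measure a lattice point (x, y) by its level m y - n x, so that the lines parallel to the
  diagonal are the level sets. A horizontal step occupies the levels [l - n, l] and a vertical
  step the levels [l, l + m], where l is the level of the starting vertex. Hence h_+ counts the
  pairs (horizontal step, later vertical step) whose level ranges overlap, and, by matching each
  interior point with the horizontal step above it in its column, the sum of the k(p) counts the
  pairs whose vertical step lies entirely below the horizontal one; coprimality of m and n
  excludes coincidences of levels throughout. Together these are the crossing pairs of the path.
  Replacing a factor "horizontal, vertical" of the path by "vertical, horizontal" does not change
  the number of crossing pairs: the pairs involving the two swapped steps change, but their
  contributions telescope along the path. After finitely many swaps one reaches the path that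
  first goes up, whose crossing pairs correspond to the lattice points strictly inside the
  rectangle and strictly below the diagonal; the point reflection of the rectangle shows that
  there are (m - 1)(n - 1)/2 of them.
\<close>

section \<open>Vertices and levels\<close>

lemma vertex_Suc:
  "k < length w \<Longrightarrow> vertex w (Suc k) =
     (if w ! k then (fst (vertex w k), snd (vertex w k) + 1) else (fst (vertex w k) + 1, snd (vertex w k)))"
  by (simp add: vertex_def take_Suc_conv_app_nth)

lemma vertex_Suc_hstep: "i \<in> hsteps w \<Longrightarrow> vertex w (Suc i) = (fst (vertex w i) + 1, snd (vertex w i))"
  by (simp add: hsteps_def vertex_Suc)

lemma vertex_Suc_vstep: "j \<in> vsteps w \<Longrightarrow> vertex w (Suc j) = (fst (vertex w j), snd (vertex w j) + 1)"
  by (simp add: vsteps_def vertex_Suc)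

lemma vertex_beyond_length: "length w \<le> k \<Longrightarrow> vertex w k = vertex w (length w)"
  by (simp add: vertex_def)

lemma fst_plus_snd_vertex: "fst (vertex w k) + snd (vertex w k) = int (min k (length w))"
  using sum_length_filter_compl[of id "take k w"] by (simp add: vertex_def comp_def)

lemma vertex_nonneg: "0 \<le> fst (vertex w k)" "0 \<le> snd (vertex w k)"
  by (simp_all add: vertex_def)

lemma vertex_mono:
  assumes "k \<le> l"
  shows "fst (vertex w k) \<le> fst (vertex w l)" "snd (vertex w k) \<le> snd (vertex w l)"
proof -
  have "take l w = take k w @ take (l - k) (drop k w)"
    using assms by (metis le_add_diff_inverse take_add)
  then show "fst (vertex w k) \<le> fst (vertex w l)" "snd (vertex w k) \<le> snd (vertex w l)"
    by (simp_all add: vertex_def)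
qed

lemma hstep_before_vstep_iff:
  assumes "i \<in> hsteps w" "j \<in> vsteps w"
  shows "fst (vertex w i) + 1 \<le> fst (vertex w j) \<longleftrightarrow> i < j"
proof
  assume "i < j"
  then show "fst (vertex w i) + 1 \<le> fst (vertex w j)"
    using vertex_mono(1)[of "Suc i" j w] vertex_Suc_hstep[OF assms(1)] by simp
next
  assume "fst (vertex w i) + 1 \<le> fst (vertex w j)"
  then show "i < j"
    using vertex_mono(1)[of j i w] by (cases "j \<le> i") auto
qed

lemma hstep_end_inj:
  assumes "i \<in> hsteps w" "i' \<in> hsteps w" "fst (vertex w (Suc i)) = fst (vertex w (Suc i'))"
  shows "i = i'"
  using assms vertex_mono(1)[of "Suc i" i' w] vertex_mono(1)[of "Suc i'" i w]
  by (cases i i' rule: linorder_cases) (auto simp: vertex_Suc_hstep)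

text \<open>The level is m times the signed vertical distance from the diagonal; the lines parallel
  to the diagonal are its level sets.\<close>

definition level :: "nat \<Rightarrow> nat \<Rightarrow> int \<times> int \<Rightarrow> int" where
  "level m n p = int m * snd p - int n * fst p"

abbreviation path_level :: "nat \<Rightarrow> nat \<Rightarrow> bool list \<Rightarrow> nat \<Rightarrow> int" where
  "path_level m n w k \<equiv> level m n (vertex w k)"

lemma path_level_0 [simp]: "path_level m n w 0 = 0"
  by (simp add: vertex_def level_def)

lemma path_level_Suc:
  "k < length w \<Longrightarrow>
     path_level m n w (Suc k) = (if w ! k then path_level m n w k + int m else path_level m n w k - int n)"
  by (simp add: level_def vertex_Suc algebra_simps)

lemma path_level_Suc_hstep: "i \<in> hsteps w \<Longrightarrow> path_level m n w (Suc i) = path_level m n w i - int n"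
  by (simp add: level_def vertex_Suc_hstep algebra_simps)

lemma path_level_Suc_vstep: "j \<in> vsteps w \<Longrightarrow> path_level m n w (Suc j) = path_level m n w j + int m"
  by (simp add: level_def vertex_Suc_vstep algebra_simps)

lemma level_eq_same_column:
  assumes "0 < m" "fst p = fst q" "\<bar>level m n p - level m n q\<bar> < int m"
  shows "p = q"
proof -
  have "\<bar>int m * (snd p - snd q)\<bar> < int m * 1"
    using assms(2,3) by (simp add: level_def algebra_simps)
  then have "snd p = snd q"
    using assms(1) by (simp add: abs_mult mult_less_cancel_left_pos)
  then show ?thesis using assms(2) by (simp add: prod_eq_iff)
qed

lemma coprime_dvd_level_diff:
  assumes "coprime m n" "int m dvd level m n p - level m n q"
  shows "int m dvd fst p - fst q"
proof -
  have "int n * (fst p - fst q) = int m * (snd p - snd q) - (level m n p - level m n q)"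
    by (simp add: level_def algebra_simps)
  then have "int m dvd int n * (fst p - fst q)"
    using assms(2) by (simp add: dvd_diff)
  moreover have "coprime (int m) (int n)" using assms(1) by simp
  ultimately show ?thesis using coprime_dvd_mult_right_iff by blast
qed

lemma dyck_path_length: "dyck_path m n w \<Longrightarrow> length w = m + n"
  using sum_length_filter_compl[of id w] by (simp add: dyck_path_def comp_def)

lemma dyck_path_last_vertex: "dyck_path m n w \<Longrightarrow> vertex w (length w) = (int m, int n)"
  by (simp add: dyck_path_def vertex_def)

lemma dyck_path_iff_level:
  "dyck_path m n w \<longleftrightarrow> length (filter Not w) = m \<and> length (filter id w) = n \<and>
     (\<forall>j \<le> length w. 0 \<le> path_level m n w j)"
  unfolding dyck_path_def level_def by auto

lemma dyck_path_level_nonneg: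
  assumes "dyck_path m n w"
  shows "0 \<le> path_level m n w k"
  using assms vertex_beyond_length[of w k] unfolding dyck_path_iff_level
  by (cases "k \<le> length w") auto

lemma dyck_path_vertex_le:
  assumes "dyck_path m n w"
  shows "fst (vertex w k) \<le> int m" "snd (vertex w k) \<le> int n"
proof -
  have "vertex w k = vertex w (min k (length w))"
    using vertex_beyond_length[of w k] by (cases "k \<le> length w") (simp_all add: min_def)
  moreover have "min k (length w) \<le> length w" by simp
  note vertex_mono[OF this, of w]
  ultimately show "fst (vertex w k) \<le> int m" "snd (vertex w k) \<le> int n"
    using dyck_path_last_vertex[OF assms] by simp_all
qed

lemma int_multiple_in_interval_cases:
  assumes "int m dvd x" "- int m < x" "x \<le> int m"
  shows "x = 0 \<or> x = int m"
proof (cases "x = 0")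
  case False
  then have "int m \<le> \<bar>x\<bar>" using assms(1) by (simp add: zdvd_imp_le)
  then show ?thesis using assms(2,3) by linarith
qed simp

lemma dyck_path_level_pos:
  assumes "dyck_path m n w" "coprime m n" "0 < m" "0 < k" "k < length w"
  shows "0 < path_level m n w k"
proof (rule ccontr)
  obtain x y where v: "vertex w k = (x, y)" by fastforce
  assume "\<not> 0 < path_level m n w k"
  then have lev0: "int m * y = int n * x"
    using dyck_path_level_nonneg[OF assms(1), of k] v by (simp add: level_def)
  have "int m dvd x"
    using coprime_dvd_level_diff[OF assms(2), of "(x, y)" "(0, 0)"] lev0 by (simp add: level_def)
  moreover have "0 \<le> x" "x \<le> int m"
    using vertex_nonneg(1)[of w k] dyck_path_vertex_le(1)[OF assms(1), of k] v by simp_all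
  ultimately have "x = 0 \<or> x = int m" using assms(3) int_multiple_in_interval_cases[of m x] by simp
  then have "(x, y) = (0, 0) \<or> (x, y) = (int m, int n)"
    using lev0 assms(3) by (auto simp: mult.commute)
  moreover have "x + y = int k" "int k < int m + int n"
    using fst_plus_snd_vertex[of w k] v assms(5) dyck_path_length[OF assms(1)] by simp_all
  ultimately show False using assms(4) by auto
qed

section \<open>Interior points\<close>

lemma interior_ptsE:
  assumes "p \<in> interior_pts m n w"
  obtains i where "i \<in> hsteps w" "fst (vertex w (Suc i)) = fst p" "snd p < snd (vertex w i)"
    "0 < level m n p"
  using assms unfolding interior_pts_def level_def by auto

lemma interior_pt_bounds:
  assumes "dyck_path m n w" "p \<in> interior_pts m n w"
  shows "1 \<le> fst p" "fst p \<le> int m" "0 \<le> snd p" "snd p < int n"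
proof -
  obtain i where i: "i \<in> hsteps w" "fst (vertex w (Suc i)) = fst p" "snd p < snd (vertex w i)"
    and pos: "0 < level m n p"
    using assms(2) by (rule interior_ptsE)
  show "1 \<le> fst p" using i(1,2) vertex_nonneg(1)[of w i] by (simp add: vertex_Suc_hstep)
  show "fst p \<le> int m" using i(2) dyck_path_vertex_le(1)[OF assms(1), of "Suc i"] by simp
  show "snd p < int n" using i(3) dyck_path_vertex_le(2)[OF assms(1), of i] by simp
  show "0 \<le> snd p"
  proof (rule ccontr)
    assume "\<not> 0 \<le> snd p"
    then have "int m * snd p \<le> 0" by (simp add: mult_nonneg_nonpos)
    moreover have "0 \<le> int n * fst p" using \<open>1 \<le> fst p\<close> by simp
    ultimately show False using pos by (simp add: level_def)
  qed
qed

lemma finite_interior_pts: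
  assumes "dyck_path m n w"
  shows "finite (interior_pts m n w)"
proof (rule finite_subset)
  show "interior_pts m n w \<subseteq> {1..int m} \<times> {0..int n}"
  proof
    fix p assume "p \<in> interior_pts m n w"
    then show "p \<in> {1..int m} \<times> {0..int n}"
      using interior_pt_bounds[OF assms] by (cases p) fastforce
  qed
qed simp

lemma interior_pt_eq_vertex:
  assumes "dyck_path m n w" "coprime m n" "0 < m" "p \<in> interior_pts m n w"
    "level m n p = path_level m n w k"
  shows "p = vertex w k"
proof -
  let ?v = "vertex w k"
  have dvd: "int m dvd fst p - fst ?v"
    using coprime_dvd_level_diff[OF assms(2)] assms(5) by simp
  have ne: "fst p - fst ?v \<noteq> int m"
  proof
    assume "fst p - fst ?v = int m"
    then have "int m * (snd p - snd ?v) = int m * int n"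
      using assms(5) by (simp add: level_def algebra_simps)
    then have "snd p - snd ?v = int n" using assms(3) by simp
    then show False
      using interior_pt_bounds(4)[OF assms(1,4)] vertex_nonneg(2)[of w k] by simp
  qed
  have "- int m < fst p - fst ?v" "fst p - fst ?v \<le> int m"
    using interior_pt_bounds[OF assms(1,4)] vertex_nonneg(1)[of w k]
      dyck_path_vertex_le(1)[OF assms(1), of k] by simp_all
  then have "fst p = fst ?v" using int_multiple_in_interval_cases[OF dvd] ne by simp
  then show ?thesis using level_eq_same_column[OF assms(3), of p "vertex w k" n] assms(3,5) by simp
qed

section \<open>Lines parallel to the diagonal\<close>

definition line_level :: "nat \<Rightarrow> nat \<Rightarrow> real \<times> real \<Rightarrow> real" where
  "line_level m n q = real m * snd q - real n * fst q"

lemma mem_diag_line_iff: "r \<in> diag_line m n q \<longleftrightarrow> line_level m n r = line_level m n q"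
  unfolding diag_line_def line_level_def by (auto simp: algebra_simps)

lemma line_level_rpt: "line_level m n (rpt p) = of_int (level m n p)"
  by (simp add: line_level_def rpt_def level_def)

lemma line_level_surj: "0 < m \<Longrightarrow> line_level m n (0, c / real m) = c"
  by (simp add: line_level_def)

lemma ex_in_unit_interval_affine:
  fixes k b c d :: real
  assumes "0 < k"
  shows "(\<exists>t. b \<le> t \<and> t \<le> b + 1 \<and> k * t - d = c) \<longleftrightarrow> k * b - d \<le> c \<and> c \<le> k * b - d + k"
proof
  assume "\<exists>t. b \<le> t \<and> t \<le> b + 1 \<and> k * t - d = c"
  then obtain t where "b \<le> t" "t \<le> b + 1" "k * t - d = c" by blast
  then show "k * b - d \<le> c \<and> c \<le> k * b - d + k"
    using mult_left_mono[of b t k] mult_left_mono[of t "b + 1" k] assms by (simp add: algebra_simps)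
next
  assume "k * b - d \<le> c \<and> c \<le> k * b - d + k"
  then have "b \<le> (c + d) / k" "(c + d) / k \<le> b + 1" using assms by (simp_all add: field_simps)
  then show "\<exists>t. b \<le> t \<and> t \<le> b + 1 \<and> k * t - d = c" using assms by (intro exI[of _ "(c + d) / k"]) simp
qed

lemma diag_line_meets_vstep:
  assumes "0 < m" "w ! j"
  shows "diag_line m n q \<inter> step_seg w j \<noteq> {} \<longleftrightarrow>
    of_int (path_level m n w j) \<le> line_level m n q \<and> line_level m n q \<le> of_int (path_level m n w j) + real m"
proof -
  define a b where "a = real_of_int (fst (vertex w j))" and "b = real_of_int (snd (vertex w j))"
  have "step_seg w j = {(a, y) | y. b \<le> y \<and> y \<le> b + 1}"
    using assms(2) by (simp add: step_seg_def Let_def a_def b_def)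
  moreover have "(a, y) \<in> diag_line m n q \<longleftrightarrow> real m * y - real n * a = line_level m n q" for y
    by (simp add: mem_diag_line_iff line_level_def)
  ultimately have "diag_line m n q \<inter> step_seg w j \<noteq> {} \<longleftrightarrow>
      (\<exists>y. b \<le> y \<and> y \<le> b + 1 \<and> real m * y - real n * a = line_level m n q)"
    by fastforce
  also have "\<dots> \<longleftrightarrow> real m * b - real n * a \<le> line_level m n q \<and> line_level m n q \<le> real m * b - real n * a + real m"
    using assms(1) by (simp add: ex_in_unit_interval_affine)
  finally show ?thesis by (simp add: a_def b_def level_def)
qed

lemma diag_line_meets_hstep:
  assumes "0 < n" "\<not> w ! i"
  shows "diag_line m n q \<inter> step_seg w i \<noteq> {} \<longleftrightarrow>
    of_int (path_level m n w i) - real n \<le> line_level m n q \<and> line_level m n q \<le> of_int (path_level m n w i)"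
proof -
  define a b where "a = real_of_int (fst (vertex w i))" and "b = real_of_int (snd (vertex w i))"
  have "step_seg w i = {(x, b) | x. a \<le> x \<and> x \<le> a + 1}"
    using assms(2) by (simp add: step_seg_def Let_def a_def b_def)
  moreover have "(x, b) \<in> diag_line m n q \<longleftrightarrow> real n * x - real m * b = - line_level m n q" for x
    by (auto simp: mem_diag_line_iff line_level_def)
  ultimately have "diag_line m n q \<inter> step_seg w i \<noteq> {} \<longleftrightarrow>
      (\<exists>x. a \<le> x \<and> x \<le> a + 1 \<and> real n * x - real m * b = - line_level m n q)"
    by fastforce
  also have "\<dots> \<longleftrightarrow> real n * a - real m * b \<le> - line_level m n q \<and> - line_level m n q \<le> real n * a - real m * b + real n"
    using assms(1) by (simp add: ex_in_unit_interval_affine)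
  finally show ?thesis by (auto simp: a_def b_def level_def)
qed

definition overlap_pairs :: "nat \<Rightarrow> nat \<Rightarrow> bool list \<Rightarrow> (nat \<times> nat) set" where
  "overlap_pairs m n w = {(i, j). i \<in> hsteps w \<and> j \<in> vsteps w \<and> i < j \<and>
     path_level m n w (Suc i) \<le> path_level m n w j + int m \<and> path_level m n w j \<le> path_level m n w i}"

lemma diag_line_meets_both_iff:
  assumes "0 < m" "0 < n" "i \<in> hsteps w" "j \<in> vsteps w"
  shows "(\<exists>q. diag_line m n q \<inter> step_seg w i \<noteq> {} \<and> diag_line m n q \<inter> step_seg w j \<noteq> {}) \<longleftrightarrow>
    path_level m n w (Suc i) \<le> path_level m n w j + int m \<and> path_level m n w j \<le> path_level m n w i"
    (is "?meet \<longleftrightarrow> ?overlap")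
proof -
  let ?h = "path_level m n w i" and ?v = "path_level m n w j"
  have steps: "\<not> w ! i" "w ! j" using assms(3,4) by (simp_all add: hsteps_def vsteps_def)
  let ?I = "\<lambda>c. of_int ?h - real n \<le> c \<and> c \<le> of_int ?h \<and> of_int ?v \<le> c \<and> c \<le> of_int ?v + real m"
  have meets_iff: "diag_line m n q \<inter> step_seg w i \<noteq> {} \<and> diag_line m n q \<inter> step_seg w j \<noteq> {} \<longleftrightarrow>
      ?I (line_level m n q)" for q
    using diag_line_meets_hstep[OF assms(2) steps(1), where m = m and q = q]
      diag_line_meets_vstep[OF assms(1) steps(2), where n = n and q = q] by linarith
  have "?meet \<longleftrightarrow> (\<exists>c. ?I c)"
    unfolding meets_iff by (metis line_level_surj[OF assms(1)])
  also have "\<dots> \<longleftrightarrow> ?h - int n \<le> ?v + int m \<and> ?v \<le> ?h"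
  proof
    assume "\<exists>c. ?I c"
    then obtain c where "?I c" by blast
    then have "real_of_int (?h - int n) \<le> real_of_int (?v + int m)" "real_of_int ?v \<le> real_of_int ?h"
      by simp_all
    then show "?h - int n \<le> ?v + int m \<and> ?v \<le> ?h" by (simp only: of_int_le_iff)
  next
    assume "?h - int n \<le> ?v + int m \<and> ?v \<le> ?h"
    then show "\<exists>c. ?I c" by (intro exI[of _ "of_int (max (?h - int n) ?v)"]) auto
  qed
  finally show ?thesis using path_level_Suc_hstep[OF assms(3)] by simp
qed

lemma h_plus_eq_card_overlap_pairs:
  assumes "0 < m" "0 < n"
  shows "h_plus m n w = card (overlap_pairs m n w)"
proof -
  have "(i \<in> hsteps w \<and> j \<in> vsteps w \<and> fst (vertex w i) + 1 \<le> fst (vertex w j) \<and>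
      (\<exists>q. diag_line m n q \<inter> step_seg w i \<noteq> {} \<and> diag_line m n q \<inter> step_seg w j \<noteq> {})) \<longleftrightarrow>
    (i \<in> hsteps w \<and> j \<in> vsteps w \<and> i < j \<and>
      path_level m n w (Suc i) \<le> path_level m n w j + int m \<and> path_level m n w j \<le> path_level m n w i)"
    for i j
    using hstep_before_vstep_iff[of i w j] diag_line_meets_both_iff[OF assms, of i w j] by blast
  then show ?thesis unfolding h_plus_def overlap_pairs_def by (simp only:)
qed

section \<open>The sum of the k(p)\<close>

lemma rpt_mem_vstep_iff:
  assumes "j \<in> vsteps w"
  shows "rpt p \<in> step_seg w j \<longleftrightarrow> p = vertex w j \<or> p = vertex w (Suc j)"
proof -
  let ?v = "vertex w j"
  have "rpt p \<in> step_seg w j \<longleftrightarrow> real_of_int (fst p) = real_of_int (fst ?v) \<and>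
      real_of_int (snd ?v) \<le> real_of_int (snd p) \<and> real_of_int (snd p) \<le> real_of_int (snd ?v) + 1"
    using assms by (auto simp: vsteps_def step_seg_def Let_def rpt_def)
  also have "\<dots> \<longleftrightarrow> fst p = fst ?v \<and> (snd p = snd ?v \<or> snd p = snd ?v + 1)"
    by linarith
  finally show ?thesis using vertex_Suc_vstep[OF assms] by (auto simp: prod_eq_iff)
qed

lemma kval_eq_card:
  assumes "dyck_path m n w" "coprime m n" "0 < m" "p \<in> interior_pts m n w"
  shows "kval m n w p =
    card {j \<in> vsteps w. path_level m n w j < level m n p \<and> level m n p < path_level m n w j + int m}"
proof -
  have *: "rpt p \<notin> step_seg w j \<and> diag_line m n (rpt p) \<inter> step_seg w j \<noteq> {} \<longleftrightarrow>
      path_level m n w j < level m n p \<and> level m n p < path_level m n w j + int m"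
    if j: "j \<in> vsteps w" for j
  proof -
    have on_step: "rpt p \<in> step_seg w j \<longleftrightarrow>
        level m n p = path_level m n w j \<or> level m n p = path_level m n w j + int m"
      using interior_pt_eq_vertex[OF assms, of j] interior_pt_eq_vertex[OF assms, of "Suc j"]
        path_level_Suc_vstep[OF j, of m n] rpt_mem_vstep_iff[OF j, of p] by auto
    have "real_of_int (path_level m n w j) + real m = real_of_int (path_level m n w j + int m)"
      by simp
    then have meets: "diag_line m n (rpt p) \<inter> step_seg w j \<noteq> {} \<longleftrightarrow>
        path_level m n w j \<le> level m n p \<and> level m n p \<le> path_level m n w j + int m"
      using diag_line_meets_vstep[OF assms(3), of w j n "rpt p"] j
      by (simp only: vsteps_def mem_Collect_eq line_level_rpt of_int_le_iff simp_thms)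
    show ?thesis using on_step meets by auto
  qed
  show ?thesis
    unfolding kval_def using * by (intro arg_cong[where f = card] Collect_cong) blast
qed

definition separated_pairs :: "nat \<Rightarrow> nat \<Rightarrow> bool list \<Rightarrow> (nat \<times> nat) set" where
  "separated_pairs m n w = {(i, j). i \<in> hsteps w \<and> j \<in> vsteps w \<and>
     path_level m n w j + int m < path_level m n w (Suc i)}"

lemma hstep_end_level_not_dvd:
  assumes "dyck_path m n w" "coprime m n" "0 < m" "i \<in> hsteps w" "j \<in> vsteps w"
    "path_level m n w j + int m < path_level m n w (Suc i)"
  shows "\<not> int m dvd path_level m n w (Suc i) - path_level m n w j"
proof
  let ?e = "vertex w (Suc i)" and ?v = "vertex w j"
  have e: "?e = (fst (vertex w i) + 1, snd (vertex w i))" by (rule vertex_Suc_hstep[OF assms(4)])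
  assume "int m dvd path_level m n w (Suc i) - path_level m n w j"
  then have "int m dvd fst ?e - fst ?v" by (rule coprime_dvd_level_diff[OF assms(2)])
  moreover have "- int m < fst ?e - fst ?v" "fst ?e - fst ?v \<le> int m"
    using e vertex_nonneg[of w i] vertex_nonneg[of w j]
      dyck_path_vertex_le[OF assms(1), of "Suc i"] dyck_path_vertex_le[OF assms(1), of j] by simp_all
  ultimately have "fst ?e - fst ?v = 0 \<or> fst ?e - fst ?v = int m" by (rule int_multiple_in_interval_cases)
  then show False
  proof
    assume same_column: "fst ?e - fst ?v = 0"
    then have "int m * snd ?v < int m * snd ?e"
      using assms(6) by (simp add: level_def)
    then have "snd ?v < snd ?e" using assms(3) by simp
    then show False
      using same_column e vertex_mono[of j i w] vertex_mono[of "Suc i" j w] by (cases "j \<le> i") auto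
  next
    assume "fst ?e - fst ?v = int m"
    then have "fst ?e = int m"
      using vertex_nonneg(1)[of w j] dyck_path_vertex_le(1)[OF assms(1), of "Suc i"] by simp
    moreover have "int m * snd ?e \<le> int m * int n"
      using dyck_path_vertex_le(2)[OF assms(1), of "Suc i"] by (simp add: mult_left_mono)
    ultimately have "path_level m n w (Suc i) \<le> 0" by (simp add: level_def mult.commute)
    then show False using assms(6) dyck_path_level_nonneg[OF assms(1), of j] by simp
  qed
qed

text \<open>The lattice point below the end of the horizontal step i whose level lies in (l, l + m],
  where l is the level of the vertical step j; its level is not l + m by the previous lemma.\<close>

lemma interior_pt_below_hstep:
  assumes "dyck_path m n w" "coprime m n" "0 < m" "i \<in> hsteps w" "j \<in> vsteps w"
    "path_level m n w j + int m < path_level m n w (Suc i)"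
  defines "p \<equiv> (fst (vertex w (Suc i)),
    snd (vertex w (Suc i)) - (path_level m n w (Suc i) - path_level m n w j - 1) div int m)"
  shows "p \<in> interior_pts m n w" "path_level m n w j < level m n p" "level m n p < path_level m n w j + int m"
proof -
  let ?e = "path_level m n w (Suc i)" and ?v = "path_level m n w j"
  define t where "t = (?e - ?v - 1) div int m"
  define r where "r = (?e - ?v - 1) mod int m"
  have split: "?e - ?v - 1 = int m * t + r" and r: "0 \<le> r" "r < int m"
    using assms(3) by (simp_all add: t_def r_def)
  have "r \<noteq> int m - 1"
  proof
    assume "r = int m - 1"
    then have "?e - ?v = int m * (t + 1)" using split by (simp add: algebra_simps)
    then show False using hstep_end_level_not_dvd[OF assms(1-6)] by simp
  qed
  have level_p: "level m n p = ?v + 1 + r"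
    using split by (simp add: p_def t_def level_def algebra_simps)
  moreover have "r < int m - 1" using r \<open>r \<noteq> int m - 1\<close> by linarith
  ultimately show "?v < level m n p" "level m n p < ?v + int m"
    using r(1) by linarith+
  have "0 < int m * t" using split r(2) assms(6) by linarith
  then have "1 \<le> t" using assms(3) by (simp add: zero_less_mult_iff)
  then have "snd p < snd (vertex w i)"
    using vertex_Suc_hstep[OF assms(4)] by (simp add: p_def t_def)
  moreover have "0 < level m n p"
    using level_p r dyck_path_level_nonneg[OF assms(1), of j] by simp
  ultimately show "p \<in> interior_pts m n w"
    using assms(4) unfolding interior_pts_def by (auto simp: p_def level_def)
qed

lemma card_interior_pts_in_vstep_range:
  assumes "dyck_path m n w" "coprime m n" "0 < m" "j \<in> vsteps w"
  shows "card {p \<in> interior_pts m n w. path_level m n w j < level m n p \<and> level m n p < path_level m n w j + int m}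
    = card {i \<in> hsteps w. path_level m n w j + int m < path_level m n w (Suc i)}"
proof -
  let ?v = "path_level m n w j"
  let ?P = "{p \<in> interior_pts m n w. ?v < level m n p \<and> level m n p < ?v + int m}"
  let ?H = "{i \<in> hsteps w. ?v + int m < path_level m n w (Suc i)}"
  define g where "g i = (fst (vertex w (Suc i)),
    snd (vertex w (Suc i)) - (path_level m n w (Suc i) - ?v - 1) div int m)" for i
  note below = interior_pt_below_hstep[OF assms(1-3) _ assms(4), folded g_def]
  have "bij_betw g ?H ?P"
  proof (rule bij_betw_imageI)
    show "inj_on g ?H" by (rule inj_onI) (auto simp: g_def dest: hstep_end_inj)
    show "g ` ?H = ?P"
    proof
      show "g ` ?H \<subseteq> ?P" using below by auto
      show "?P \<subseteq> g ` ?H"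
      proof
        fix p assume p: "p \<in> ?P"
        then obtain i where i: "i \<in> hsteps w" "fst (vertex w (Suc i)) = fst p" "snd p < snd (vertex w i)"
          by (auto elim: interior_ptsE)
        have "path_level m n w (Suc i) - level m n p = int m * (snd (vertex w i) - snd p)"
          using i vertex_Suc_hstep[OF i(1)] by (simp add: level_def algebra_simps)
        moreover have "int m * 1 \<le> int m * (snd (vertex w i) - snd p)"
          using i(3) by (intro mult_left_mono) simp_all
        ultimately have "level m n p + int m \<le> path_level m n w (Suc i)" by linarith
        then have "i \<in> ?H" using i(1) p by simp
        moreover have "g i = p"
          using below[OF i(1)] \<open>i \<in> ?H\<close> p i(2) level_eq_same_column[OF assms(3), of "g i" p n]
          by (auto simp: g_def)
        ultimately show "p \<in> g ` ?H" by blast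
      qed
    qed
  qed
  then show ?thesis by (simp add: bij_betw_same_card)
qed

lemma sum_card_filter_swap:
  assumes "finite A" "finite B"
  shows "(\<Sum>x\<in>A. card {y \<in> B. R x y}) = (\<Sum>y\<in>B. card {x \<in> A. R x y})"
proof -
  have card_eq: "card {z \<in> C. P z} = (\<Sum>z\<in>C. if P z then 1 else 0)" if "finite C" for C and P :: "_ \<Rightarrow> bool"
    using that by (simp add: sum.inter_filter[symmetric])
  have "(\<Sum>x\<in>A. card {y \<in> B. R x y}) = (\<Sum>x\<in>A. \<Sum>y\<in>B. if R x y then 1 else 0)"
    using card_eq[OF assms(2)] by simp
  also have "\<dots> = (\<Sum>y\<in>B. \<Sum>x\<in>A. if R x y then 1 else 0)"
    by (rule sum.swap)
  also have "\<dots> = (\<Sum>y\<in>B. card {x \<in> A. R x y})"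
    using card_eq[OF assms(1)] by simp
  finally show ?thesis .
qed

lemma sum_kval_eq_card_separated_pairs:
  assumes "dyck_path m n w" "coprime m n" "0 < m"
  shows "(\<Sum>p\<in>interior_pts m n w. kval m n w p) = card (separated_pairs m n w)"
proof -
  have fin: "finite (hsteps w)" "finite (vsteps w)" "finite (interior_pts m n w)"
    using finite_interior_pts[OF assms(1)] by (simp_all add: hsteps_def vsteps_def)
  have "(\<Sum>p\<in>interior_pts m n w. kval m n w p) = (\<Sum>p\<in>interior_pts m n w.
      card {j \<in> vsteps w. path_level m n w j < level m n p \<and> level m n p < path_level m n w j + int m})"
    using kval_eq_card[OF assms] by simp
  also have "\<dots> = (\<Sum>j\<in>vsteps w. card {p \<in> interior_pts m n w.
      path_level m n w j < level m n p \<and> level m n p < path_level m n w j + int m})"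
    using fin by (intro sum_card_filter_swap)
  also have "\<dots> = (\<Sum>j\<in>vsteps w. card {i \<in> hsteps w. path_level m n w j + int m < path_level m n w (Suc i)})"
    using card_interior_pts_in_vstep_range[OF assms] by simp
  also have "\<dots> = (\<Sum>i\<in>hsteps w. card {j \<in> vsteps w. path_level m n w j + int m < path_level m n w (Suc i)})"
    using fin by (intro sum_card_filter_swap)
  also have "\<dots> = card (Sigma (hsteps w) (\<lambda>i. {j \<in> vsteps w. path_level m n w j + int m < path_level m n w (Suc i)}))"
    using fin by (simp add: card_SigmaI)
  also have "Sigma (hsteps w) (\<lambda>i. {j \<in> vsteps w. path_level m n w j + int m < path_level m n w (Suc i)})
      = separated_pairs m n w"
    by (auto simp: separated_pairs_def)
  finally show ?thesis .
qed

section \<open>Crossing pairs\<close>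

text \<open>Here s k tells whether step k is vertical and a k is the level of vertex k.\<close>

definition crossing :: "(nat \<Rightarrow> bool) \<Rightarrow> (nat \<Rightarrow> int) \<Rightarrow> nat \<Rightarrow> nat \<Rightarrow> bool" where
  "crossing s a i j \<longleftrightarrow> \<not> s i \<and> s j \<and> (i < j \<and> a j \<le> a i \<or> j < i \<and> a (Suc j) < a (Suc i))"

definition crossing_count :: "(nat \<Rightarrow> bool) \<Rightarrow> (nat \<Rightarrow> int) \<Rightarrow> nat \<Rightarrow> int" where
  "crossing_count s a N = (\<Sum>i<N. \<Sum>j<N. of_bool (crossing s a i j))"

lemma double_sum_supported_on_two_lines:
  fixes D :: "nat \<Rightarrow> nat \<Rightarrow> 'a::comm_monoid_add"
  assumes "Suc p < N" "\<And>i j. i \<notin> {p, Suc p} \<Longrightarrow> j \<notin> {p, Suc p} \<Longrightarrow> D i j = 0"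
  shows "(\<Sum>i<N. \<Sum>j<N. D i j) = (\<Sum>i\<in>{p, Suc p}. \<Sum>j\<in>{p, Suc p}. D i j)
    + (\<Sum>k\<in>{..<N} - {p, Suc p}. D k p + D k (Suc p) + D p k + D (Suc p) k)"
proof -
  let ?P = "{p, Suc p}" and ?K = "{..<N} - {p, Suc p}"
  have split: "(\<Sum>i<N. f i) = (\<Sum>i\<in>?P. f i) + (\<Sum>i\<in>?K. f i)" for f :: "nat \<Rightarrow> 'a"
    using sum.subset_diff[of ?P "{..<N}" f] assms(1) by (simp add: add.commute)
  have "(\<Sum>i<N. \<Sum>j<N. D i j) = (\<Sum>i\<in>?P. \<Sum>j\<in>?P. D i j) + (\<Sum>i\<in>?P. \<Sum>j\<in>?K. D i j)
      + ((\<Sum>i\<in>?K. \<Sum>j\<in>?P. D i j) + (\<Sum>i\<in>?K. \<Sum>j\<in>?K. D i j))"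
    by (simp add: split sum.distrib add_ac)
  also have "(\<Sum>i\<in>?K. \<Sum>j\<in>?K. D i j) = 0" using assms(2) by simp
  also have "(\<Sum>i\<in>?P. \<Sum>j\<in>?K. D i j) = (\<Sum>k\<in>?K. D p k + D (Suc p) k)"
    by (simp add: sum.swap[of _ _ ?K] sum.distrib)
  finally show ?thesis by (simp add: sum.distrib add_ac)
qed

text \<open>Swapping a horizontal step p and the vertical step after it only changes the pairs
  involving p or Suc p. The pair formed by the two steps is lost; the changes in the remaining
  pairs telescope to -1 over the steps before p and to 0 over the steps after Suc p.\<close>

lemma crossing_count_swap:
  fixes s s' :: "nat \<Rightarrow> bool" and a a' :: "nat \<Rightarrow> int" and m n :: int
  assumes "Suc p < N" "0 < m" "0 < n"
    and s: "\<not> s p" "s (Suc p)" "s' p" "\<not> s' (Suc p)" "\<And>k. k \<notin> {p, Suc p} \<Longrightarrow> s' k = s k"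
    and a': "\<And>k. k \<noteq> Suc p \<Longrightarrow> a' k = a k" "a' (Suc p) = a p + m"
    and step: "\<And>k. k < N \<Longrightarrow> a (Suc k) = (if s k then a k + m else a k - n)"
    and ends: "a 0 = 0" "0 < a (Suc p)" "a N \<le> a p + m"
  shows "crossing_count s a N = crossing_count s' a' N"
proof -
  define D :: "nat \<Rightarrow> nat \<Rightarrow> int"
    where "D i j = of_bool (crossing s a i j) - of_bool (crossing s' a' i j)" for i j
  define quad where "quad k = D k p + D k (Suc p) + D p k + D (Suc p) k" for k
  have a1: "a (Suc p) = a p - n" and a2: "a (Suc (Suc p)) = a p - n + m"
    using step[of p] step[of "Suc p"] assms(1) s(1,2) by simp_all
  have D_zero: "D i j = 0" if "i \<notin> {p, Suc p}" "j \<notin> {p, Suc p}" for i j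
    using that unfolding D_def crossing_def by (simp add: s(5) a'(1))
  have "crossing_count s a N - crossing_count s' a' N = (\<Sum>i<N. \<Sum>j<N. D i j)"
    by (simp add: crossing_count_def D_def sum_subtractf)
  also have "\<dots> = (\<Sum>i\<in>{p, Suc p}. \<Sum>j\<in>{p, Suc p}. D i j) + (\<Sum>k\<in>{..<N} - {p, Suc p}. quad k)"
    unfolding quad_def by (rule double_sum_supported_on_two_lines[OF assms(1) D_zero])
  also have "(\<Sum>i\<in>{p, Suc p}. \<Sum>j\<in>{p, Suc p}. D i j) = 1"
    unfolding D_def crossing_def using s a' a1 a2 assms(2,3) by simp
  also have "{..<N} - {p, Suc p} = {..<p} \<union> {Suc (Suc p)..<N}" using assms(1) by auto
  also have "(\<Sum>k\<in>{..<p} \<union> {Suc (Suc p)..<N}. quad k) = (\<Sum>k<p. quad k) + (\<Sum>k = Suc (Suc p)..<N. quad k)"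
    by (rule sum.union_disjoint) auto
  also have "(\<Sum>k<p. quad k) = (\<Sum>k<p. of_bool (a (Suc k) < a (Suc p)) - of_bool (a k < a (Suc p)))"
  proof (rule sum.cong)
    fix k assume "k \<in> {..<p}"
    then have k: "k < p" "k < N" using assms(1) by simp_all
    show "quad k = of_bool (a (Suc k) < a (Suc p)) - of_bool (a k < a (Suc p))"
      unfolding quad_def D_def crossing_def using k step[OF k(2)] s a' a1 a2 assms(2,3)
      by (cases "s k") auto
  qed simp
  also have "\<dots> = - 1"
    using sum_lessThan_telescope[of "\<lambda>k. of_bool (a k < a (Suc p)) :: int" p] ends(1,2) a1 assms(3)
    by simp
  also have "(\<Sum>k = Suc (Suc p)..<N. quad k)
      = (\<Sum>k = Suc (Suc p)..<N. of_bool (a (Suc k) \<le> a p + m) - of_bool (a k \<le> a p + m))"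
  proof (rule sum.cong)
    fix k assume "k \<in> {Suc (Suc p)..<N}"
    then have k: "Suc (Suc p) \<le> k" "k < N" by simp_all
    show "quad k = of_bool (a (Suc k) \<le> a p + m) - of_bool (a k \<le> a p + m)"
      unfolding quad_def D_def crossing_def using k step[OF k(2)] s a' a1 a2 assms(2,3)
      by (cases "s k") auto
  qed simp
  also have "\<dots> = 0"
    using sum_Suc_diff'[of "Suc (Suc p)" N "\<lambda>k. of_bool (a k \<le> a p + m) :: int"] assms(1,3) ends(3) a2
    by simp
  finally show ?thesis by simp
qed

definition cross_pairs :: "nat \<Rightarrow> nat \<Rightarrow> bool list \<Rightarrow> (nat \<times> nat) set" where
  "cross_pairs m n w = {(i, j). i < length w \<and> j < length w \<and> crossing ((!) w) (path_level m n w) i j}"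

lemma card_cross_pairs:
  "int (card (cross_pairs m n w)) = crossing_count ((!) w) (path_level m n w) (length w)"
proof -
  have "cross_pairs m n w =
      Sigma {..<length w} (\<lambda>i. {..<length w} \<inter> {j. crossing ((!) w) (path_level m n w) i j})"
    by (auto simp: cross_pairs_def)
  then show ?thesis by (simp add: crossing_count_def card_SigmaI)
qed

lemma cross_pairs_eq_Un:
  "cross_pairs m n w = overlap_pairs m n w \<union> separated_pairs m n w"
proof -
  have "(i, j) \<in> cross_pairs m n w \<longleftrightarrow> (i, j) \<in> overlap_pairs m n w \<union> separated_pairs m n w" for i j
  proof (cases "i \<in> hsteps w \<and> j \<in> vsteps w")
    case True
    then have "i \<noteq> j" by (auto simp: hsteps_def vsteps_def)
    then show ?thesis
      using True path_level_Suc_hstep[of i w m n] path_level_Suc_vstep[of j w m n]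
      by (auto simp: cross_pairs_def overlap_pairs_def separated_pairs_def crossing_def
        hsteps_def vsteps_def)
  next
    case False
    then show ?thesis
      by (auto simp: cross_pairs_def overlap_pairs_def separated_pairs_def crossing_def
        hsteps_def vsteps_def)
  qed
  then show ?thesis by auto
qed

lemma card_cross_pairs_eq_h_plus_sum_kval:
  assumes "dyck_path m n w" "coprime m n" "0 < m" "0 < n"
  shows "card (cross_pairs m n w) = h_plus m n w + (\<Sum>p\<in>interior_pts m n w. kval m n w p)"
proof -
  have "finite (hsteps w \<times> vsteps w)" by (simp add: hsteps_def vsteps_def)
  then have "finite (overlap_pairs m n w)" "finite (separated_pairs m n w)"
    by (auto simp: overlap_pairs_def separated_pairs_def intro: finite_subset)
  moreover have "overlap_pairs m n w \<inter> separated_pairs m n w = {}"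
    by (auto simp: overlap_pairs_def separated_pairs_def)
  ultimately show ?thesis
    using h_plus_eq_card_overlap_pairs[OF assms(3,4)] sum_kval_eq_card_separated_pairs[OF assms(1-3)]
    by (simp add: cross_pairs_eq_Un card_Un_disjoint)
qed

lemma nth_swap_FT:
  "k \<notin> {length u, Suc (length u)} \<Longrightarrow> (u @ True # False # z) ! k = (u @ False # True # z) ! k"
  by (cases "k < length u") (auto simp: nth_append nth_Cons split: nat.split)

lemma vertex_swap_FT:
  "k \<noteq> Suc (length u) \<Longrightarrow> vertex (u @ True # False # z) k = vertex (u @ False # True # z) k"
  by (cases "k \<le> length u") (auto simp: vertex_def not_le take_Cons' dest!: less_imp_Suc_add)

lemma path_level_swap_FT:
  "path_level m n (u @ True # False # z) (Suc (length u))
    = path_level m n (u @ False # True # z) (length u) + int m"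
  using path_level_Suc[of "length u" "u @ True # False # z" m n] vertex_swap_FT[of "length u" u z] by simp

lemma dyck_path_swap_FT:
  assumes "dyck_path m n (u @ False # True # z)"
  shows "dyck_path m n (u @ True # False # z)"
  unfolding dyck_path_iff_level
proof (intro conjI allI impI)
  show "length (filter Not (u @ True # False # z)) = m" "length (filter id (u @ True # False # z)) = n"
    using assms by (simp_all add: dyck_path_def)
  show "0 \<le> path_level m n (u @ True # False # z) k" for k
    using dyck_path_level_nonneg[OF assms] path_level_swap_FT[of m n u z] vertex_swap_FT[of k u z]
    by (cases "k = Suc (length u)") auto
qed

lemma crossing_count_swap_FT:
  fixes u z :: "bool list"
  defines "w \<equiv> u @ False # True # z" and "w' \<equiv> u @ True # False # z"
  assumes dyck: "dyck_path m n w" and "coprime m n" "0 < m" "0 < n"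
  shows "crossing_count ((!) w) (path_level m n w) (length w)
    = crossing_count ((!) w') (path_level m n w') (length w')"
proof -
  let ?p = "length u"
  have len: "length w' = length w" "Suc ?p < length w" by (simp_all add: w_def w'_def)
  have lev: "0 < path_level m n w (Suc ?p)"
    using dyck_path_level_pos[OF dyck assms(4,5)] len(2) by simp
  have "path_level m n w (length w) = 0"
    using dyck_path_last_vertex[OF dyck] by (simp add: level_def)
  then have last: "path_level m n w (length w) \<le> path_level m n w ?p + int m"
    using dyck_path_level_nonneg[OF dyck, of ?p] by simp
  show ?thesis unfolding len(1)
    by (rule crossing_count_swap[where p = ?p and m = "int m" and n = "int n"])
      (use len(2) assms(5,6) lev last path_level_Suc[of _ w m n] in
        \<open>simp_all add: w_def w'_def nth_append nth_swap_FT vertex_swap_FT path_level_swap_FT\<close>)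
qed

section \<open>Reduction to the highest path\<close>

fun inversions :: "bool list \<Rightarrow> nat" where
  "inversions [] = 0"
| "inversions (x # xs) = (if x then 0 else length (filter id xs)) + inversions xs"

lemma inversions_swap_FT: "inversions (u @ False # True # z) = Suc (inversions (u @ True # False # z))"
  by (induction u) auto

lemma no_False_True_imp_replicate:
  "\<not> (\<exists>u z. w = u @ False # True # z) \<Longrightarrow> \<exists>a b. w = replicate a True @ replicate b False"
proof (induction w)
  case Nil
  then show ?case by simp
next
  case (Cons x xs)
  have "\<not> (\<exists>u z. xs = u @ False # True # z)"
  proof
    assume "\<exists>u z. xs = u @ False # True # z"
    then obtain u z where "x # xs = (x # u) @ False # True # z" by auto
    then show False using Cons.prems by blast
  qed
  then obtain a b where xs: "xs = replicate a True @ replicate b False"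
    using Cons.IH by blast
  show ?case
  proof (cases x)
    case True
    then have "x # xs = replicate (Suc a) True @ replicate b False" using xs by simp
    then show ?thesis by blast
  next
    case False
    have "a = 0"
    proof (rule ccontr)
      assume "a \<noteq> 0"
      then obtain c where "a = Suc c" by (cases a) auto
      then have "x # xs = [] @ False # True # (replicate c True @ replicate b False)"
        using xs False by simp
      then show False using Cons.prems by blast
    qed
    then have "x # xs = replicate 0 True @ replicate (Suc b) False" using xs False by simp
    then show ?thesis by blast
  qed
qed

definition highest_path :: "nat \<Rightarrow> nat \<Rightarrow> bool list" where
  "highest_path m n = replicate n True @ replicate m False"

lemma card_cross_pairs_eq_highest_path:
  assumes "dyck_path m n w" "coprime m n" "0 < m" "0 < n"
  shows "card (cross_pairs m n w) = card (cross_pairs m n (highest_path m n))"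
  using assms(1)
proof (induction "inversions w" arbitrary: w rule: less_induct)
  case less
  show ?case
  proof (cases "\<exists>u z. w = u @ False # True # z")
    case True
    then obtain u z where w: "w = u @ False # True # z" by blast
    let ?w' = "u @ True # False # z"
    have "int (card (cross_pairs m n w)) = int (card (cross_pairs m n ?w'))"
      unfolding card_cross_pairs w using crossing_count_swap_FT less.prems assms(2-4) w by blast
    moreover have "card (cross_pairs m n ?w') = card (cross_pairs m n (highest_path m n))"
      using less.hyps[of ?w'] dyck_path_swap_FT less.prems inversions_swap_FT w by simp
    ultimately show ?thesis by simp
  next
    case False
    then obtain a b where "w = replicate a True @ replicate b False"
      using no_False_True_imp_replicate by blast
    moreover have "a = n" "b = m"
      using less.prems calculation by (simp_all add: dyck_path_def)
    ultimately show ?thesis by (simp add: highest_path_def)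
  qed
qed

lemma card_lattice_pts_below_diagonal:
  assumes "coprime m n"
  shows "2 * card {(x, y) \<in> {1..<m} \<times> {1..<n}. int m * int y + int n * int x < int m * int n}
    = (m - 1) * (n - 1)"
proof -
  define G where "G = {1..<m} \<times> {1..<n}"
  define c where "c p = int m * int (snd p) + int n * int (fst p)" for p :: "nat \<times> nat"
  define S where "S = {p \<in> G. c p < int m * int n}"
  define T where "T = {p \<in> G. int m * int n < c p}"
  define \<sigma> where "\<sigma> p = (m - fst p, n - snd p)" for p :: "nat \<times> nat"
  have off_line: "c p \<noteq> int m * int n" if "p \<in> G" for p
  proof
    assume "c p = int m * int n"
    then have "int n * int (fst p) = int m * (int n - int (snd p))"
      by (simp add: c_def algebra_simps)
    then have "int m dvd int n * int (fst p)" by simp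
    then have "int m dvd int (fst p)"
      using assms by (simp add: coprime_dvd_mult_right_iff)
    then show False using that zdvd_imp_le[of "int m" "int (fst p)"] by (auto simp: G_def)
  qed
  have \<sigma>_G: "\<sigma> p \<in> G" "\<sigma> (\<sigma> p) = p" "c (\<sigma> p) = 2 * (int m * int n) - c p" if "p \<in> G" for p
    using that by (auto simp: G_def \<sigma>_def c_def of_nat_diff algebra_simps)
  have "bij_betw \<sigma> S T"
    by (rule bij_betw_byWitness[where f' = \<sigma>]) (auto simp: S_def T_def \<sigma>_G)
  then have "card S = card T" by (rule bij_betw_same_card)
  moreover have "G = S \<union> T"
    using off_line by (auto simp: S_def T_def neq_iff)
  moreover have "S \<inter> T = {}" by (auto simp: S_def T_def)
  moreover have "finite G" "card G = (m - 1) * (n - 1)" by (simp_all add: G_def)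
  ultimately have "2 * card S = (m - 1) * (n - 1)"
    by (metis card_Un_disjoint finite_Un mult_2)
  moreover have "{(x, y) \<in> {1..<m} \<times> {1..<n}. int m * int y + int n * int x < int m * int n} = S"
    by (auto simp: S_def G_def c_def)
  ultimately show ?thesis by simp
qed

lemma path_level_highest_path:
  assumes "k \<le> n + m"
  shows "path_level m n (highest_path m n) k = int m * int (min k n) - int n * int (k - n)"
proof -
  have "take k (highest_path m n) = replicate (min k n) True @ replicate (k - n) False"
    using assms by (simp add: highest_path_def min_absorb1)
  then show ?thesis by (simp add: vertex_def level_def)
qed

lemma mem_cross_pairs_highest_path_iff:
  "(i, j) \<in> cross_pairs m n (highest_path m n) \<longleftrightarrow>
    n \<le> i \<and> i < n + m \<and> j < n \<and> int m * int (Suc j) + int n * int (Suc i - n) < int m * int n"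
proof -
  let ?w = "highest_path m n"
  have nth: "?w ! k = (k < n)" if "k < n + m" for k
    using that by (simp add: highest_path_def nth_append)
  have len: "length ?w = n + m" by (simp add: highest_path_def)
  have "(i, j) \<in> cross_pairs m n ?w \<longleftrightarrow> (n \<le> i \<and> i < n + m \<and> j < n) \<and>
      (i < j \<and> path_level m n ?w j \<le> path_level m n ?w i \<or> j < i \<and> path_level m n ?w (Suc j) < path_level m n ?w (Suc i))"
    unfolding cross_pairs_def crossing_def len using nth by auto
  also have "\<dots> \<longleftrightarrow> n \<le> i \<and> i < n + m \<and> j < n \<and> path_level m n ?w (Suc j) < path_level m n ?w (Suc i)"
    by auto
  also have "\<dots> \<longleftrightarrow> n \<le> i \<and> i < n + m \<and> j < n \<and> int m * int (Suc j) + int n * int (Suc i - n) < int m * int n"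
    by (auto simp: path_level_highest_path algebra_simps)
  finally show ?thesis .
qed

lemma card_cross_pairs_highest_path:
  assumes "coprime m n"
  shows "2 * card (cross_pairs m n (highest_path m n)) = (m - 1) * (n - 1)"
proof -
  let ?S = "{(x, y) \<in> {1..<m} \<times> {1..<n}. int m * int y + int n * int x < int m * int n}"
  let ?f = "\<lambda>(x, y). (n + x - 1, y - 1)"
  have "cross_pairs m n (highest_path m n) = ?f ` ?S"
  proof (intro set_eqI iffI)
    fix p assume "p \<in> cross_pairs m n (highest_path m n)"
    then obtain i j where p: "p = (i, j)" and ij: "n \<le> i" "i < n + m" "j < n"
      and below: "int m * int (Suc j) + int n * int (Suc i - n) < int m * int n"
      by (cases p) (auto simp: mem_cross_pairs_highest_path_iff)
    have "0 \<le> int m * int (Suc j)" "0 \<le> int n * int (Suc i - n)" by simp_all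
    then have "int n * int (Suc i - n) < int m * int n" "int m * int (Suc j) < int m * int n"
      using below by linarith+
    moreover have "0 < n" "0 < m" using ij by simp_all
    ultimately have "Suc i - n < m" "Suc j < n"
      by (simp_all add: mult.commute[of "int m"] mult_less_cancel_left_pos)
    then have "(Suc i - n, Suc j) \<in> ?S" using below ij(1) by auto
    moreover have "p = ?f (Suc i - n, Suc j)" using p ij by simp
    ultimately show "p \<in> ?f ` ?S" by blast
  next
    fix p assume "p \<in> ?f ` ?S"
    then obtain x y where "p = (n + x - 1, y - 1)" "1 \<le> x" "x < m" "1 \<le> y" "y < n"
      "int m * int y + int n * int x < int m * int n" by auto
    then show "p \<in> cross_pairs m n (highest_path m n)"
      by (auto simp: mem_cross_pairs_highest_path_iff Suc_diff_le)
  qed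
  moreover have "inj_on ?f ?S" by (rule inj_onI) auto
  ultimately show ?thesis
    using card_lattice_pts_below_diagonal[OF assms] by (simp add: card_image)
qed

theorem mainTheorem3:
  fixes m n :: nat and w :: "bool list"
  assumes "0 < m" and "0 < n" and "coprime m n" and "dyck_path m n w"
  shows "real ((m - 1) * (n - 1)) / 2
           = real (h_plus m n w) + (\<Sum>p\<in>interior_pts m n w. real (kval m n w p))"
proof -
  have "(m - 1) * (n - 1) = 2 * card (cross_pairs m n w)"
    using card_cross_pairs_highest_path[OF assms(3)] card_cross_pairs_eq_highest_path[OF assms(4,3,1,2)]
    by simp
  also have "\<dots> = 2 * (h_plus m n w + (\<Sum>p\<in>interior_pts m n w. kval m n w p))"
    using card_cross_pairs_eq_h_plus_sum_kval[OF assms(4,3,1,2)] by simp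
  finally show ?thesis by (simp add: of_nat_sum)
qed

end
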